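(* For every $k\ge0$ the sequence $\mathcal{P}_k(\delta_1)$ belongs to $\ell^1(\mathbb{N}^0,\frac1{4^n})$, $\|\mathcal{P}_0(\delta_1)\|_{1,\frac1{4^n}}=1$, and $$\|\mathcal{P}_k(\delta_1)\|_{1,\frac1{4^n}}=\mathcal{P}_k\!\left(-\tfrac14\right)=\frac{\alpha_k}{4^{k-1}},\qquad k\ge1,$$ where $\alpha_1=1$, $\alpha_2=5$ and $\alpha_k=4(\alpha_{k-1}+\alpha_{k-2})$ for $k\ge3$.
   Context: The Catalan polynomials $(\mathcal{P}_k)_{k\ge0}$ are defined by $\mathcal{P}_0(z)=\mathcal{P}_1(z)=1$ and $\mathcal{P}_{k+2}(z)=\mathcal{P}_{k+1}(z)-z\mathcal{P}_k(z)$ for $k\ge0$; equivalently $\mathcal{P}_k(z)=\frac{(1+\sqrt{1-4z})^{k+1}-(1-\sqrt{1-4z})^{k+1}}{2^{k+1}\sqrt{1-4z}}$. $\ell^1(\mathbb{N}^0,\frac1{4^n})$ is the space of complex sequences $a=(a(n))_{n\ge0}$ with norm $\|a\|_{1,\frac1{4^n}}=\sum_{n\ge0}|a(n)|/4^n<\infty$. $\delta_j$ denotes the sequence with $\delta_j(n)=1$ if $n=j$ and $0$ otherwise; for a polynomial $P(z)=\sum_{j=0}^m p_jz^j$, $P(\delta_1)=\sum_{j=0}^m p_j\delta_j$ (the sequence of its coefficients). *)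

theory Defs
  imports "HOL-Analysis.Analysis" "HOL-Computational_Algebra.Polynomial"
begin

fun catalan_poly :: "nat \<Rightarrow> complex poly" where
  "catalan_poly 0 = 1"
| "catalan_poly (Suc 0) = 1"
| "catalan_poly (Suc (Suc k)) = catalan_poly (Suc k) - [:0, 1:] * catalan_poly k"

text \<open>P(delta_1) = sum_j p_j delta_j : the coefficient sequence of P.\<close>
definition poly_at_delta1 :: "complex poly \<Rightarrow> (nat \<Rightarrow> complex)" where
  "poly_at_delta1 p = (\<lambda>n. coeff p n)"

definition in_l1_w4 :: "(nat \<Rightarrow> complex) \<Rightarrow> bool" where
  "in_l1_w4 a \<longleftrightarrow> summable (\<lambda>n. norm (a n) / 4 ^ n)"

definition norm_l1_w4 :: "(nat \<Rightarrow> complex) \<Rightarrow> real" where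
  "norm_l1_w4 a = (\<Sum>n. norm (a n) / 4 ^ n)"

fun alpha_seq :: "nat \<Rightarrow> nat" where
  "alpha_seq 0 = 0"
| "alpha_seq (Suc 0) = 1"
| "alpha_seq (Suc (Suc 0)) = 5"
| "alpha_seq (Suc (Suc (Suc k))) = 4 * (alpha_seq (Suc (Suc k)) + alpha_seq (Suc k))"

end

theory Submission
  imports Defs
begin

text \<open>The coefficient of \<open>z\<^sup>n\<close> in \<open>\<P>\<^sub>k\<close> is \<open>(-1)\<^sup>n (k-n choose n)\<close>, so the coefficients
  alternate in sign and the weighted \<open>\<ell>\<^sup>1\<close>-norm of \<open>\<P>\<^sub>k(\<delta>\<^sub>1)\<close>, a finite sum, equals
  \<open>\<P>\<^sub>k(-1/4)\<close>. At \<open>z = -1/4\<close> the defining recurrence becomes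
  \<open>\<P>\<^sub>k(-1/4) = \<P>\<^sub>k\<^sub>-\<^sub>1(-1/4) + \<P>\<^sub>k\<^sub>-\<^sub>2(-1/4)/4\<close>, which is the recurrence of \<open>\<alpha>\<^sub>k / 4\<^sup>k\<^sup>-\<^sup>1\<close>.\<close>

lemma coeff_catalan_poly:
  "coeff (catalan_poly k) n = (-1) ^ n * of_nat ((k - n) choose n)"
proof (induction k arbitrary: n rule: catalan_poly.induct)
  case (3 k)
  show ?case
  proof (cases n)
    case (Suc m)
    have "(Suc (Suc k) - n) choose n = ((Suc k - n) choose n) + ((k - m) choose m)"
      using Suc by (cases "m \<le> k") (auto simp: Suc_diff_le)
    then show ?thesis
      using 3 Suc by (simp add: coeff_pCons algebra_simps)
  qed (simp add: 3)
qed (simp_all add: coeff_1)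

lemma poly_alternating_coeffs:
  fixes p :: "complex poly" and c :: "nat \<Rightarrow> real"
  assumes coeff_p: "\<And>n. coeff p n = (-1) ^ n * of_real (c n)"
    and c_nonneg: "\<And>n. c n \<ge> 0" and "r \<ge> 0"
  shows "poly p (- of_real r) = of_real (\<Sum>n\<le>degree p. norm (coeff p n) * r ^ n)"
proof -
  have "coeff p n * (- of_real r) ^ n = of_real (norm (coeff p n) * r ^ n)" for n
  proof -
    have "coeff p n * (- of_real r) ^ n = (-1) ^ (2 * n) * of_real (c n * r ^ n)"
      by (simp add: coeff_p power_minus' power_mult_distrib power_add flip: mult_2)
    also have "\<dots> = of_real (norm (coeff p n) * r ^ n)"
      by (simp add: coeff_p norm_mult norm_power c_nonneg)
    finally show ?thesis .
  qed
  then show ?thesis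
    by (simp add: poly_altdef)
qed

lemma l1_w4_poly_at_delta1:
  "in_l1_w4 (poly_at_delta1 p)"
  "norm_l1_w4 (poly_at_delta1 p) = (\<Sum>n\<le>degree p. norm (coeff p n) / 4 ^ n)"
proof -
  have "(\<lambda>n. norm (poly_at_delta1 p n) / 4 ^ n) sums (\<Sum>n\<le>degree p. norm (coeff p n) / 4 ^ n)"
    unfolding poly_at_delta1_def by (rule sums_finite) (auto simp: coeff_eq_0)
  then show "in_l1_w4 (poly_at_delta1 p)"
    and "norm_l1_w4 (poly_at_delta1 p) = (\<Sum>n\<le>degree p. norm (coeff p n) / 4 ^ n)"
    unfolding in_l1_w4_def norm_l1_w4_def by (simp_all add: sums_iff)
qed

lemma norm_l1_w4_catalan_poly:
  "complex_of_real (norm_l1_w4 (poly_at_delta1 (catalan_poly k))) = poly (catalan_poly k) (-1/4)"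
proof -
  have "poly (catalan_poly k) (- of_real (1/4))
        = of_real (\<Sum>n\<le>degree (catalan_poly k). norm (coeff (catalan_poly k) n) * (1/4) ^ n)"
    by (rule poly_alternating_coeffs[where c = "\<lambda>n. real ((k - n) choose n)"])
       (simp_all add: coeff_catalan_poly)
  then show ?thesis
    by (simp add: l1_w4_poly_at_delta1 power_divide)
qed

lemma catalan_poly_minus_quarter:
  "k \<ge> 1 \<Longrightarrow> poly (catalan_poly k) (-1/4) = of_nat (alpha_seq k) / 4 ^ (k - 1)"
proof (induction k rule: alpha_seq.induct)
  case (4 k)
  have "poly (catalan_poly (Suc (Suc (Suc k)))) (-1/4)
        = poly (catalan_poly (Suc (Suc k))) (-1/4) + poly (catalan_poly (Suc k)) (-1/4) / 4"
    by simp
  also have "\<dots> = of_nat (alpha_seq (Suc (Suc k))) / 4 ^ Suc k + of_nat (alpha_seq (Suc k)) / 4 ^ Suc k"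
    using 4 by simp
  also have "\<dots> = of_nat (alpha_seq (Suc (Suc (Suc k)))) / 4 ^ (Suc (Suc (Suc k)) - 1)"
    by (simp add: field_simps)
  finally show ?case .
qed (simp_all add: field_simps)

theorem lemma3p5:
  shows "(\<forall>k. in_l1_w4 (poly_at_delta1 (catalan_poly k)))
    \<and> norm_l1_w4 (poly_at_delta1 (catalan_poly 0)) = 1
    \<and> (\<forall>k\<ge>1. complex_of_real (norm_l1_w4 (poly_at_delta1 (catalan_poly k)))
                 = poly (catalan_poly k) (-1/4)
             \<and> poly (catalan_poly k) (-1/4) = of_nat (alpha_seq k) / 4 ^ (k - 1))"
  using l1_w4_poly_at_delta1 norm_l1_w4_catalan_poly catalan_poly_minus_quarter
  by simp

end
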